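(* Let $A\in\mathbb{R}^{m\times n}$, and let $p:[0,\infty)\to\mathbb{R}$ be concave, increasing and continuous with right derivative $p'(0+)>0$. For $x\in\mathbb{R}^n$ define $R(x)\in\mathbb{R}^n$ by $$R(x)_i=\mathrm{sgn}(x_i)\Big(1-\frac{d_i(x)}{p'(0+)}\Big),$$ where $d_i(x)=p'(0+)$ if $x_i=0$, and, if $x_i\neq0$, $d_i(x)$ is any element of the superdifferential $[p'_+(|x_i|),p'_-(|x_i|)]$ of the concave function $p$ at $|x_i|$ (one-sided derivatives). Given $\bar x\in\mathbb{R}^n$, consider the iteration $x^{(0)}=\mathbf{0}$ and $$x^{(k+1)}\in\arg\min_{x\in\mathbb{R}^n}\ \|x\|_1-\langle R(x^{(k)}),x\rangle\quad\text{s.t.}\quad Ax=A\bar x,\qquad k=0,1,2,\dots$$ Let $T\subseteq\{1,\dots,n\}$ be a fixed index set. Suppose that basis pursuit uniquely recovers every vector supported on $T$, i.e. for every $\bar x$ with $\{i:\bar x_i\neq0\}\subseteq T$, $\bar x$ is the unique solution of $\min_x\|x\|_1$ s.t. $Ax=A\bar x$. Then the iteration above also recovers every such $\bar x$: for every $\bar x$ supported on $T$ and every $k\ge 0$, the minimization problem defining $x^{(k+1)}$ has $\bar x$ as its unique solution, so $x^{(k)}=\bar x$ for all $k\ge1$.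
   Context: $\mathrm{sgn}(t)=t/|t|$ for $t\neq0$ and $\mathrm{sgn}(0)=0$. A vector is supported on $T$ if all its nonzero entries have indices in $T$. (When $x^{(0)}=\mathbf{0}$, $R(x^{(0)})=\mathbf{0}$, so the first step is basis pursuit.) *)

theory Defs
  imports "HOL-Analysis.Analysis"
begin

definition l1norm :: "real ^ 'n \<Rightarrow> real" where
  "l1norm x = (\<Sum>i\<in>UNIV. \<bar>x $ i\<bar>)"

definition right_deriv_is :: "(real \<Rightarrow> real) \<Rightarrow> real \<Rightarrow> real \<Rightarrow> bool" where
  "right_deriv_is p t dr \<longleftrightarrow> ((\<lambda>s. (p s - p t) / (s - t)) \<longlongrightarrow> dr) (at_right t)"

definition left_deriv_is :: "(real \<Rightarrow> real) \<Rightarrow> real \<Rightarrow> real \<Rightarrow> bool" where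
  "left_deriv_is p t dl \<longleftrightarrow> ((\<lambda>s. (p s - p t) / (s - t)) \<longlongrightarrow> dl) (at_left t)"

definition in_superdiff :: "(real \<Rightarrow> real) \<Rightarrow> real \<Rightarrow> real \<Rightarrow> bool" where
  "in_superdiff p t d \<longleftrightarrow>
     (\<exists>dr dl. right_deriv_is p t dr \<and> left_deriv_is p t dl \<and> dr \<le> d \<and> d \<le> dl)"

definition admissible_d :: "(real \<Rightarrow> real) \<Rightarrow> real \<Rightarrow> real ^ 'n \<Rightarrow> real ^ 'n \<Rightarrow> bool" where
  "admissible_d p dp0 x d \<longleftrightarrow>
     (\<forall>i. (x $ i = 0 \<longrightarrow> d $ i = dp0) \<and> (x $ i \<noteq> 0 \<longrightarrow> in_superdiff p \<bar>x $ i\<bar> (d $ i)))"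

definition Rvec :: "real \<Rightarrow> real ^ 'n \<Rightarrow> real ^ 'n \<Rightarrow> real ^ 'n" where
  "Rvec dp0 x d = (\<chi> i. sgn (x $ i) * (1 - d $ i / dp0))"

definition is_argmin :: "(real ^ 'n \<Rightarrow> real) \<Rightarrow> real ^ 'n ^ 'm \<Rightarrow> real ^ 'm \<Rightarrow> real ^ 'n \<Rightarrow> bool" where
  "is_argmin f A b z \<longleftrightarrow> A *v z = b \<and> (\<forall>x. A *v x = b \<longrightarrow> f z \<le> f x)"

definition is_unique_argmin :: "(real ^ 'n \<Rightarrow> real) \<Rightarrow> real ^ 'n ^ 'm \<Rightarrow> real ^ 'm \<Rightarrow> real ^ 'n \<Rightarrow> bool" where
  "is_unique_argmin f A b z \<longleftrightarrow> is_argmin f A b z \<and> (\<forall>x. is_argmin f A b x \<longrightarrow> x = z)"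

definition supported_on :: "real ^ 'n \<Rightarrow> 'n set \<Rightarrow> bool" where
  "supported_on x T \<longleftrightarrow> {i. x $ i \<noteq> 0} \<subseteq> T"

end

theory Submission
  imports Defs
begin

text \<open>
  Every admissible \<open>R(x)\<close> is a damped sign vector of \<open>x\<close>, i.e. \<open>R\<^sub>i = sgn(x\<^sub>i) w\<^sub>i\<close>
  with \<open>0 \<le> w\<^sub>i \<le> 1\<close>, because for concave increasing \<open>p\<close> the superdifferential at
  \<open>t > 0\<close> lies in \<open>[0, p'(0+)]\<close>; and \<open>R(0) = 0\<close> is a damped sign vector of anything.
  Uniqueness of basis pursuit on \<open>T\<close> gives the null space property
  \<open>\<parallel>h\<^sub>T\<parallel>\<^sub>1 < \<parallel>h\<^sub>-\<^sub>T\<parallel>\<^sub>1\<close> for \<open>0 \<noteq> h \<in> ker A\<close>, and if \<open>R\<close> is a damped sign vector of \<open>x\<^sub>b\<close>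
  the objective \<open>\<parallel>x\<parallel>\<^sub>1 - \<langle>R, x\<rangle>\<close> grows from \<open>x\<^sub>b\<close> to \<open>x\<^sub>b + h\<close> by at least
  \<open>\<parallel>h\<^sub>-\<^sub>T\<parallel>\<^sub>1 - \<parallel>h\<^sub>T\<parallel>\<^sub>1 > 0\<close>. So while the iterate is \<open>0\<close> or \<open>x\<^sub>b\<close>, the next one is \<open>x\<^sub>b\<close>.
\<close>

lemma concave_on_slope_le:
  fixes f :: "real \<Rightarrow> real"
  assumes f: "concave_on I f" and I: "x \<in> I" "y \<in> I" and t: "x < t" "t < y"
  shows "(f y - f t) / (y - t) \<le> (f y - f x) / (y - x)"
    and "(f y - f x) / (y - x) \<le> (f t - f x) / (t - x)"
proof -
  have "convex_on I (\<lambda>z. - f z)"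
    using f by (simp add: concave_on_def)
  note slopes = convex_on_slope_le[OF this I t]
  have flip: "(- f a - - f b) / (a - b) = - ((f b - f a) / (b - a))" for a b
    by (metis minus_diff_eq minus_diff_minus minus_divide_right)
  show "(f y - f t) / (y - t) \<le> (f y - f x) / (y - x)"
    using slopes(2) unfolding flip by simp
  show "(f y - f x) / (y - x) \<le> (f t - f x) / (t - x)"
    using slopes(1) unfolding flip by simp
qed

lemma right_deriv_nonneg_if_mono_on:
  fixes p :: "real \<Rightarrow> real"
  assumes "mono_on {0..} p" "0 \<le> t" "right_deriv_is p t dr"
  shows "0 \<le> dr"
proof (rule tendsto_lowerbound)
  show "((\<lambda>s. (p s - p t) / (s - t)) \<longlongrightarrow> dr) (at_right t)"
    using assms(3) by (simp add: right_deriv_is_def)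
  show "\<forall>\<^sub>F s in at_right t. 0 \<le> (p s - p t) / (s - t)"
    using eventually_at_right_less[of t]
  proof eventually_elim
    case (elim s)
    then have "p t \<le> p s"
      using assms(1,2) by (auto intro: mono_onD)
    with elim show ?case by simp
  qed
qed simp

lemma concave_on_secant_le_right_deriv:
  fixes p :: "real \<Rightarrow> real"
  assumes conc: "concave_on {a..} p" and d: "right_deriv_is p a d" and "a < s"
  shows "(p s - p a) / (s - a) \<le> d"
proof (rule tendsto_lowerbound)
  show "((\<lambda>u. (p u - p a) / (u - a)) \<longlongrightarrow> d) (at_right a)"
    using d by (simp add: right_deriv_is_def)
  show "\<forall>\<^sub>F u in at_right a. (p s - p a) / (s - a) \<le> (p u - p a) / (u - a)"
    using eventually_at_right_real[OF \<open>a < s\<close>]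
  proof eventually_elim
    case (elim u)
    then show ?case
      using concave_on_slope_le(2)[OF conc, of a s u] by auto
  qed
qed simp

lemma concave_on_left_deriv_le_right_deriv:
  fixes p :: "real \<Rightarrow> real"
  assumes conc: "concave_on {a..} p" and d: "right_deriv_is p a d"
    and "a < t" and dl: "left_deriv_is p t dl"
  shows "dl \<le> d"
proof (rule tendsto_upperbound)
  show "((\<lambda>s. (p s - p t) / (s - t)) \<longlongrightarrow> dl) (at_left t)"
    using dl by (simp add: left_deriv_is_def)
  show "\<forall>\<^sub>F s in at_left t. (p s - p t) / (s - t) \<le> d"
    using eventually_at_left_real[OF \<open>a < t\<close>]
  proof eventually_elim
    case (elim s)
    have "(p s - p t) / (s - t) = (p t - p s) / (t - s)"
      by (metis minus_diff_eq minus_divide_divide)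
    also have "\<dots> \<le> (p t - p a) / (t - a)"
      using concave_on_slope_le(1)[OF conc, of a t s] elim by auto
    also have "\<dots> \<le> (p s - p a) / (s - a)"
      using concave_on_slope_le(2)[OF conc, of a t s] elim by auto
    also have "\<dots> \<le> d"
      using concave_on_secant_le_right_deriv[OF conc d] elim by simp
    finally show ?case .
  qed
qed simp

lemma in_superdiff_bounds:
  fixes p :: "real \<Rightarrow> real"
  assumes "concave_on {0..} p" "mono_on {0..} p" "right_deriv_is p 0 dp0"
    and "0 < t" "in_superdiff p t d"
  shows "0 \<le> d" "d \<le> dp0"
proof -
  obtain dr dl where dr: "right_deriv_is p t dr" and dl: "left_deriv_is p t dl"
    and "dr \<le> d" "d \<le> dl"
    using assms(5) by (auto simp: in_superdiff_def)
  have "0 \<le> dr"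
    using right_deriv_nonneg_if_mono_on[OF assms(2) _ dr] assms(4) by simp
  moreover have "dl \<le> dp0"
    using concave_on_left_deriv_le_right_deriv[OF assms(1,3,4) dl] .
  ultimately show "0 \<le> d" "d \<le> dp0"
    using \<open>dr \<le> d\<close> \<open>d \<le> dl\<close> by linarith+
qed

definition damped_sign :: "real ^ 'n \<Rightarrow> real ^ 'n \<Rightarrow> bool" where
  "damped_sign R x \<longleftrightarrow> (\<forall>i. \<exists>w. 0 \<le> w \<and> w \<le> 1 \<and> R $ i = sgn (x $ i) * w)"

lemma damped_sign_zero: "damped_sign 0 x"
  unfolding damped_sign_def by (intro allI exI[of _ 0]) simp

lemma Rvec_zero: "Rvec dp0 0 d = 0"
  by (simp add: Rvec_def vec_eq_iff)

lemma damped_sign_Rvec: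
  fixes p :: "real \<Rightarrow> real"
  assumes "concave_on {0..} p" "mono_on {0..} p" "right_deriv_is p 0 dp0" "0 < dp0"
    and "admissible_d p dp0 x d"
  shows "damped_sign (Rvec dp0 x d) x"
  unfolding damped_sign_def
proof
  fix i
  show "\<exists>w. 0 \<le> w \<and> w \<le> 1 \<and> Rvec dp0 x d $ i = sgn (x $ i) * w"
  proof (cases "x $ i = 0")
    case True
    then show ?thesis by (intro exI[of _ 0]) (simp add: Rvec_def)
  next
    case False
    then have "in_superdiff p \<bar>x $ i\<bar> (d $ i)"
      using assms(5) by (simp add: admissible_d_def)
    moreover have "0 < \<bar>x $ i\<bar>"
      using False by simp
    ultimately have "0 \<le> d $ i" "d $ i \<le> dp0"
      using in_superdiff_bounds[OF assms(1-3)] by blast+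
    with \<open>0 < dp0\<close> have "0 \<le> d $ i / dp0" "d $ i / dp0 \<le> 1"
      by simp_all
    then show ?thesis
      by (intro exI[of _ "1 - d $ i / dp0"]) (simp add: Rvec_def)
  qed
qed

lemma is_unique_argminI:
  assumes "A *v z = b" and "\<And>x. A *v x = b \<Longrightarrow> x \<noteq> z \<Longrightarrow> f z < f x"
  shows "is_unique_argmin f A b z"
  using assms unfolding is_unique_argmin_def is_argmin_def
  by (metis order.strict_iff_not order.refl)

lemma null_space_property_if_unique_recovery:
  fixes A :: "real ^ 'n ^ 'm" and h :: "real ^ 'n"
  assumes BP: "\<forall>xb. supported_on xb T \<longrightarrow> is_unique_argmin l1norm A (A *v xb) xb"
    and "A *v h = 0" and "h \<noteq> 0"
  shows "(\<Sum>i\<in>T. \<bar>h $ i\<bar>) < (\<Sum>i\<in>-T. \<bar>h $ i\<bar>)"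
proof -
  define u where "u = (\<chi> i. if i \<in> T then - h $ i else 0)"
  define v where "v = (\<chi> i. if i \<in> T then 0 else h $ i)"
  have "h = v - u"
    by (auto simp: u_def v_def vec_eq_iff)
  with assms(2,3) have "A *v v = A *v u" "v \<noteq> u"
    by (auto simp: matrix_vector_mult_diff_distrib)
  moreover have "supported_on u T"
    by (auto simp: supported_on_def u_def)
  then have "is_unique_argmin l1norm A (A *v u) u"
    using BP by simp
  ultimately have "l1norm u < l1norm v"
    unfolding is_unique_argmin_def is_argmin_def by (metis order.not_eq_order_implies_strict)
  moreover have "l1norm u = (\<Sum>i\<in>T. \<bar>h $ i\<bar>)" "l1norm v = (\<Sum>i\<in>-T. \<bar>h $ i\<bar>)"
    unfolding l1norm_def u_def v_def by (simp_all add: if_distrib sum.If_cases Compl_eq)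
  ultimately show ?thesis by simp
qed

lemma abs_add_minus_damped_sign_ge:
  fixes a h w :: real
  assumes "0 \<le> w" "w \<le> 1"
  shows "- \<bar>h\<bar> \<le> \<bar>a + h\<bar> - \<bar>a\<bar> - sgn a * w * h"
proof -
  have "sgn a * h \<le> \<bar>a + h\<bar> - \<bar>a\<bar>"
    by (cases "a > 0"; cases "a < 0") (auto simp: abs_if)
  moreover have "\<bar>sgn a * (1 - w) * h\<bar> \<le> \<bar>h\<bar>"
    using assms by (auto simp: abs_mult abs_sgn_eq intro: mult_left_le_one_le)
  then have "- \<bar>h\<bar> \<le> sgn a * (1 - w) * h"
    using abs_ge_minus_self[of "sgn a * (1 - w) * h"] by linarith
  moreover have "sgn a * (1 - w) * h = sgn a * h - sgn a * w * h"
    by (simp add: algebra_simps)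
  ultimately show ?thesis
    by linarith
qed

lemma unique_recovery_damped_sign:
  fixes A :: "real ^ 'n ^ 'm" and R xb :: "real ^ 'n"
  assumes BP: "\<forall>xb. supported_on xb T \<longrightarrow> is_unique_argmin l1norm A (A *v xb) xb"
    and supp: "supported_on xb T" and R: "damped_sign R xb"
  shows "is_unique_argmin (\<lambda>x. l1norm x - R \<bullet> x) A (A *v xb) xb"
proof (rule is_unique_argminI)
  fix x assume "A *v x = A *v xb" "x \<noteq> xb"
  define h where "h = x - xb"
  have "A *v h = 0" "h \<noteq> 0"
    using \<open>A *v x = A *v xb\<close> \<open>x \<noteq> xb\<close> by (auto simp: h_def matrix_vector_mult_diff_distrib)
  have termwise: "(if i \<in> T then - \<bar>h $ i\<bar> else \<bar>h $ i\<bar>) \<le> \<bar>x $ i\<bar> - \<bar>xb $ i\<bar> - R $ i * h $ i" for i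
  proof -
    obtain w where w: "0 \<le> w" "w \<le> 1" "R $ i = sgn (xb $ i) * w"
      using R by (auto simp: damped_sign_def)
    have "i \<notin> T \<Longrightarrow> xb $ i = 0"
      using supp by (auto simp: supported_on_def)
    then show ?thesis
      using abs_add_minus_damped_sign_ge[OF w(1,2), where a = "xb $ i" and h = "h $ i"] w(3)
      by (auto simp: h_def mult.assoc)
  qed
  have "(\<Sum>i\<in>T. \<bar>h $ i\<bar>) < (\<Sum>i\<in>-T. \<bar>h $ i\<bar>)"
    by (rule null_space_property_if_unique_recovery[OF BP \<open>A *v h = 0\<close> \<open>h \<noteq> 0\<close>])
  also have "\<dots> - (\<Sum>i\<in>T. \<bar>h $ i\<bar>) = (\<Sum>i\<in>UNIV. if i \<in> T then - \<bar>h $ i\<bar> else \<bar>h $ i\<bar>)"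
    by (simp add: sum.If_cases Compl_eq sum_negf)
  also have "\<dots> \<le> (\<Sum>i\<in>UNIV. \<bar>x $ i\<bar> - \<bar>xb $ i\<bar> - R $ i * h $ i)"
    by (rule sum_mono) (rule termwise)
  also have "\<dots> = (l1norm x - R \<bullet> x) - (l1norm xb - R \<bullet> xb)"
    by (simp add: l1norm_def inner_vec_def h_def right_diff_distrib sum_subtractf)
  finally show "l1norm xb - R \<bullet> xb < l1norm x - R \<bullet> x" by simp
qed simp

lemma reweighted_step_unique_argmin:
  fixes A :: "real ^ 'n ^ 'm" and p :: "real \<Rightarrow> real"
  assumes "concave_on {0..} p" "mono_on {0..} p" "right_deriv_is p 0 dp0" "0 < dp0"
    and BP: "\<forall>xb. supported_on xb T \<longrightarrow> is_unique_argmin l1norm A (A *v xb) xb"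
    and supp: "supported_on xb T"
    and "y = 0 \<or> y = xb" "admissible_d p dp0 y d"
  shows "is_unique_argmin (\<lambda>x. l1norm x - Rvec dp0 y d \<bullet> x) A (A *v xb) xb"
proof (rule unique_recovery_damped_sign[OF BP supp])
  show "damped_sign (Rvec dp0 y d) xb"
    using assms(7,8) damped_sign_Rvec[OF assms(1-4)] damped_sign_zero
    by (auto simp: Rvec_zero)
qed

theorem theorem4p1:
  fixes A :: "real ^ 'n ^ 'm" and p :: "real \<Rightarrow> real" and dp0 :: real and T :: "'n set"
  assumes conc: "concave_on {0..} p"
    and incr: "mono_on {0..} p"
    and cont: "continuous_on {0..} p"
    and dp0: "right_deriv_is p 0 dp0"
    and dp0_pos: "dp0 > 0"
    and BP: "\<forall>xb. supported_on xb T \<longrightarrow> is_unique_argmin l1norm A (A *v xb) xb"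
  shows "\<forall>xb xs. supported_on xb T \<longrightarrow> xs 0 = 0 \<longrightarrow>
           (\<forall>k. \<exists>d. admissible_d p dp0 (xs k) d \<and>
                  is_argmin (\<lambda>x. l1norm x - Rvec dp0 (xs k) d \<bullet> x) A (A *v xb) (xs (Suc k))) \<longrightarrow>
           (\<forall>k. \<forall>d. admissible_d p dp0 (xs k) d \<longrightarrow>
                  is_unique_argmin (\<lambda>x. l1norm x - Rvec dp0 (xs k) d \<bullet> x) A (A *v xb) xb)
           \<and> (\<forall>k\<ge>1. xs k = xb)"
proof (intro allI impI)
  fix xb and xs :: "nat \<Rightarrow> real ^ 'n"
  assume supp: "supported_on xb T" and "xs 0 = 0"
    and step: "\<forall>k. \<exists>d. admissible_d p dp0 (xs k) d \<and>
                  is_argmin (\<lambda>x. l1norm x - Rvec dp0 (xs k) d \<bullet> x) A (A *v xb) (xs (Suc k))"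
  note recovery = reweighted_step_unique_argmin[OF conc incr dp0 dp0_pos BP supp]
  have next_iterate: "xs (Suc k) = xb" if "xs k = 0 \<or> xs k = xb" for k
  proof -
    obtain d where "admissible_d p dp0 (xs k) d"
      and "is_argmin (\<lambda>x. l1norm x - Rvec dp0 (xs k) d \<bullet> x) A (A *v xb) (xs (Suc k))"
      using step by blast
    with recovery[OF that] show ?thesis
      by (simp add: is_unique_argmin_def)
  qed
  have iterates: "xs k = 0 \<or> xs k = xb" for k
    using \<open>xs 0 = 0\<close> next_iterate by (induction k) auto
  show "(\<forall>k d. admissible_d p dp0 (xs k) d \<longrightarrow>
          is_unique_argmin (\<lambda>x. l1norm x - Rvec dp0 (xs k) d \<bullet> x) A (A *v xb) xb)
        \<and> (\<forall>k\<ge>1. xs k = xb)"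
  proof (intro conjI allI impI)
    fix k d
    assume "admissible_d p dp0 (xs k) d"
    then show "is_unique_argmin (\<lambda>x. l1norm x - Rvec dp0 (xs k) d \<bullet> x) A (A *v xb) xb"
      by (rule recovery[OF iterates])
  next
    fix k :: nat
    assume "1 \<le> k"
    then show "xs k = xb"
      using next_iterate[OF iterates] by (cases k) auto
  qed
qed

end
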